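(* Let $X\in\mathbb{Z}^{d\times N}$ be a matrix of full rank $d$ representing an arithmetic matroid $\mathcal{A}$, and suppose $X$ is in $B$-basic form, $X=(B\,|\,A)$ with $B\in\mathbb{Z}^{d\times d}$ a diagonal matrix of full rank with non-negative entries and $A\in\mathbb{Z}^{d\times(N-d)}$. Suppose that $X'=(B\,|\,A')\in\mathbb{Z}^{d\times N}$ represents the same arithmetic matroid $\mathcal{A}$. Then $|a_{ij}|=|a'_{ij}|$ for all entries, i.e. the entries of $A$ and $A'$ are equal up to sign.
   Context: The arithmetic matroid represented by $X\in\mathbb{Z}^{d\times N}$ with columns $x_1,\dots,x_N$ is $([N],\operatorname{rk},m)$ where $\operatorname{rk}(S)$ is the dimension of the real span $\langle S\rangle_{\mathbb{R}}$ of $\{x_e:e\in S\}$ and $m(S)=|(\langle S\rangle_{\mathbb{R}}\cap\mathbb{Z}^d)/\langle S\rangle|$, with $\langle S\rangle$ the subgroup of $\mathbb{Z}^d$ generated by $\{x_e:e\in S\}$. Two matrices represent the same arithmetic matroid if these rank and multiplicity functions coincide. *)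

theory Defs
  imports Complex_Main
begin

text \<open>An integer d x N matrix X is represented as a function nat => nat => int,
  where only the entries X i e with i < d and e < N matter.\<close>

definition cols_indep :: "nat \<Rightarrow> (nat \<Rightarrow> nat \<Rightarrow> int) \<Rightarrow> nat set \<Rightarrow> bool" where
  "cols_indep d X T \<longleftrightarrow>
     (\<forall>c :: nat \<Rightarrow> real. (\<forall>i<d. (\<Sum>e\<in>T. c e * real_of_int (X i e)) = 0) \<longrightarrow> (\<forall>e\<in>T. c e = 0))"

definition mat_rk :: "nat \<Rightarrow> (nat \<Rightarrow> nat \<Rightarrow> int) \<Rightarrow> nat set \<Rightarrow> nat" where
  "mat_rk d X S = Max (card ` {T. T \<subseteq> S \<and> cols_indep d X T})"

definition span_lattice_pts :: "nat \<Rightarrow> (nat \<Rightarrow> nat \<Rightarrow> int) \<Rightarrow> nat set \<Rightarrow> (nat \<Rightarrow> int) set" where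
  "span_lattice_pts d X S = {z. (\<forall>i\<ge>d. z i = 0) \<and>
     (\<exists>c :: nat \<Rightarrow> real. \<forall>i<d. real_of_int (z i) = (\<Sum>e\<in>S. c e * real_of_int (X i e)))}"

definition gen_group :: "nat \<Rightarrow> (nat \<Rightarrow> nat \<Rightarrow> int) \<Rightarrow> nat set \<Rightarrow> (nat \<Rightarrow> int) set" where
  "gen_group d X S = {z. (\<forall>i\<ge>d. z i = 0) \<and>
     (\<exists>c :: nat \<Rightarrow> int. \<forall>i<d. z i = (\<Sum>e\<in>S. c e * X i e))}"

text \<open>m(S): order of the quotient group (span_R(S) \<inter> Z^d) / <S>,
  computed as the number of cosets z + <S>.\<close>
definition mat_mult :: "nat \<Rightarrow> (nat \<Rightarrow> nat \<Rightarrow> int) \<Rightarrow> nat set \<Rightarrow> nat" where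
  "mat_mult d X S = card ((\<lambda>z. (\<lambda>g. (\<lambda>i. z i + g i)) ` gen_group d X S) ` span_lattice_pts d X S)"

definition same_arith_matroid :: "nat \<Rightarrow> nat \<Rightarrow> (nat \<Rightarrow> nat \<Rightarrow> int) \<Rightarrow> (nat \<Rightarrow> nat \<Rightarrow> int) \<Rightarrow> bool" where
  "same_arith_matroid d N X X' \<longleftrightarrow>
     (\<forall>S. S \<subseteq> {..<N} \<longrightarrow> mat_rk d X S = mat_rk d X' S \<and> mat_mult d X S = mat_mult d X' S)"

end

theory Submission
  imports Defs "HOL-Library.FuncSet" "HOL-Library.Function_Algebras"
begin

text \<open>Replace the column \<open>i\<close> of the diagonal block \<open>B\<close> by the column \<open>j\<close> of \<open>A\<close>.
  These \<open>d\<close> columns are independent iff \<open>a\<^sub>i\<^sub>j \<noteq> 0\<close>, so equal ranks force \<open>a\<^sub>i\<^sub>j\<close> and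
  \<open>a'\<^sub>i\<^sub>j\<close> to vanish together. If \<open>a\<^sub>i\<^sub>j \<noteq> 0\<close>, division with remainder (first in
  coordinate \<open>i\<close> by \<open>|a\<^sub>i\<^sub>j|\<close>, then in each coordinate \<open>k \<noteq> i\<close> by \<open>b\<^sub>k\<^sub>k\<close>) shows that the
  box \<open>[0,|a\<^sub>i\<^sub>j|) \<times> \<Prod>\<^sub>k\<^sub>\<noteq>\<^sub>i [0,b\<^sub>k\<^sub>k)\<close> is a fundamental domain of the lattice they
  generate in \<open>\<int>\<^sup>d\<close>. Hence the multiplicity is \<open>|a\<^sub>i\<^sub>j| \<Prod>\<^sub>k\<^sub>\<noteq>\<^sub>i b\<^sub>k\<^sub>k\<close>, and equal
  multiplicities give \<open>|a\<^sub>i\<^sub>j| = |a'\<^sub>i\<^sub>j|\<close>.\<close>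

lemma card_le_mat_rk:
  assumes "finite S" "cols_indep d Y S"
  shows "card S \<le> mat_rk d Y S"
  unfolding mat_rk_def using assms by (intro Max_ge) auto

lemma mat_rk_le_card:
  assumes "finite S"
  shows "mat_rk d Y S \<le> card S"
proof -
  have "{} \<in> {T. T \<subseteq> S \<and> cols_indep d Y T}" by (simp add: cols_indep_def)
  then show ?thesis
    unfolding mat_rk_def using assms by (subst Max_le_iff) (auto intro: card_mono)
qed

lemma mat_rk_eq_card_iff:
  assumes "finite S"
  shows "mat_rk d Y S = card S \<longleftrightarrow> cols_indep d Y S"
proof
  assume rk: "mat_rk d Y S = card S"
  have "{} \<in> {T. T \<subseteq> S \<and> cols_indep d Y T}" by (simp add: cols_indep_def)
  then have "mat_rk d Y S \<in> card ` {T. T \<subseteq> S \<and> cols_indep d Y T}"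
    unfolding mat_rk_def using assms by (intro Max_in) auto
  then obtain T where "T \<subseteq> S" "cols_indep d Y T" "card T = card S" using rk by auto
  then show "cols_indep d Y S" using card_subset_eq[OF assms] by metis
qed (use assms card_le_mat_rk mat_rk_le_card le_antisym in blast)

lemma not_cols_indep_zero_col:
  assumes "finite T" "k \<in> T" "\<forall>r<d. Y r k = 0"
  shows "\<not> cols_indep d Y T"
proof
  define c :: "nat \<Rightarrow> real" where "c e = (if e = k then 1 else 0)" for e
  have "(\<Sum>e\<in>T. c e * real_of_int (Y r e)) = 0" if "r < d" for r
  proof -
    have "(\<Sum>e\<in>T. c e * real_of_int (Y r e)) = (\<Sum>e\<in>T. if e = k then real_of_int (Y r k) else 0)"
      by (rule sum.cong) (auto simp: c_def)
    then show ?thesis using assms that by simp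
  qed
  moreover assume "cols_indep d Y T"
  ultimately have "c k = 0" using assms(2) unfolding cols_indep_def by blast
  then show False by (simp add: c_def)
qed

lemma diag_pos_of_full_rank:
  assumes diag: "\<forall>r<d. \<forall>k<d. r \<noteq> k \<longrightarrow> Y r k = 0"
    and nonneg: "\<forall>k<d. Y k k \<ge> 0"
    and rk: "mat_rk d Y {..<d} = d"
  shows "\<forall>k<d. Y k k > 0"
proof (intro allI impI)
  fix k assume k: "k < d"
  have "cols_indep d Y {..<d}" using rk mat_rk_eq_card_iff[of "{..<d}"] by simp
  moreover have "\<not> cols_indep d Y {..<d}" if "Y k k = 0"
    using k diag that by (intro not_cols_indep_zero_col) auto
  ultimately show "Y k k > 0" using nonneg k by force
qed

lemma card_cosets_fundamental_domain:
  fixes G L R :: "'a::ab_group_add set"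
  assumes add: "\<And>g h. g \<in> G \<Longrightarrow> h \<in> G \<Longrightarrow> g + h \<in> G"
    and uminus: "\<And>g. g \<in> G \<Longrightarrow> - g \<in> G"
    and zero: "0 \<in> G"
    and "R \<subseteq> L"
    and cover: "\<And>z. z \<in> L \<Longrightarrow> \<exists>\<rho>\<in>R. z - \<rho> \<in> G"
    and unique: "\<And>\<rho> \<rho>'. \<rho> \<in> R \<Longrightarrow> \<rho>' \<in> R \<Longrightarrow> \<rho>' - \<rho> \<in> G \<Longrightarrow> \<rho>' = \<rho>"
  shows "card ((\<lambda>z. (+) z ` G) ` L) = card R"
proof -
  have coset_eq: "(+) z ` G = (+) \<rho> ` G" if "z - \<rho> \<in> G" for z \<rho>
  proof -
    have "(+) z ` G \<subseteq> (+) \<rho> ` G" if "z - \<rho> \<in> G" for z \<rho>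
    proof
      fix x assume "x \<in> (+) z ` G"
      then obtain g where "g \<in> G" "x = z + g" by blast
      then have "(z - \<rho>) + g \<in> G" using add that by blast
      moreover have "x = \<rho> + ((z - \<rho>) + g)" using \<open>x = z + g\<close> by (simp add: algebra_simps)
      ultimately show "x \<in> (+) \<rho> ` G" by blast
    qed
    moreover have "\<rho> - z \<in> G" using uminus[OF that] by simp
    ultimately show ?thesis using that by blast
  qed
  have "(\<lambda>z. (+) z ` G) ` L = (\<lambda>z. (+) z ` G) ` R"
  proof
    show "(\<lambda>z. (+) z ` G) ` L \<subseteq> (\<lambda>z. (+) z ` G) ` R"
    proof
      fix C assume "C \<in> (\<lambda>z. (+) z ` G) ` L"
      then obtain z where "z \<in> L" "C = (+) z ` G" by blast
      moreover obtain \<rho> where "\<rho> \<in> R" "z - \<rho> \<in> G" using cover[OF \<open>z \<in> L\<close>] by blast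
      ultimately show "C \<in> (\<lambda>z. (+) z ` G) ` R" using coset_eq by blast
    qed
  qed (use \<open>R \<subseteq> L\<close> in blast)
  moreover have "inj_on (\<lambda>z. (+) z ` G) R"
  proof (rule inj_onI)
    fix \<rho> \<rho>' assume "\<rho> \<in> R" "\<rho>' \<in> R" and eq: "(+) \<rho> ` G = (+) \<rho>' ` G"
    have "\<rho>' \<in> (+) \<rho> ` G" using zero by (subst eq) force
    then have "\<rho>' - \<rho> \<in> G" by (auto simp: algebra_simps)
    then show "\<rho> = \<rho>'" using unique \<open>\<rho> \<in> R\<close> \<open>\<rho>' \<in> R\<close> by metis
  qed
  ultimately show ?thesis by (simp add: card_image)
qed

lemma gen_group_add:
  assumes "g \<in> gen_group d Y S" "h \<in> gen_group d Y S"
  shows "g + h \<in> gen_group d Y S"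
proof -
  obtain c c' where "\<forall>r<d. g r = (\<Sum>e\<in>S. c e * Y r e)" "\<forall>r<d. h r = (\<Sum>e\<in>S. c' e * Y r e)"
    using assms unfolding gen_group_def by blast
  then have "\<forall>r<d. (g + h) r = (\<Sum>e\<in>S. (c e + c' e) * Y r e)"
    by (simp add: distrib_right sum.distrib)
  moreover have "\<forall>r\<ge>d. (g + h) r = 0" using assms unfolding gen_group_def by simp
  ultimately show ?thesis unfolding gen_group_def by (intro CollectI conjI exI)
qed

lemma gen_group_uminus:
  assumes "g \<in> gen_group d Y S"
  shows "- g \<in> gen_group d Y S"
proof -
  obtain c where "\<forall>r<d. g r = (\<Sum>e\<in>S. c e * Y r e)"
    using assms unfolding gen_group_def by blast
  then have "\<forall>r<d. (- g) r = (\<Sum>e\<in>S. (- c e) * Y r e)"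
    by (simp add: sum_negf)
  moreover have "\<forall>r\<ge>d. (- g) r = 0" using assms unfolding gen_group_def by simp
  ultimately show ?thesis unfolding gen_group_def by (intro CollectI conjI exI)
qed

lemma zero_in_gen_group: "0 \<in> gen_group d Y S"
  unfolding gen_group_def by (auto intro: exI[of _ "\<lambda>_. 0"])

lemma abs_mult_less_abs_imp_zero:
  fixes c a :: int
  assumes "\<bar>c * a\<bar> < \<bar>a\<bar>"
  shows "c = 0"
proof (rule ccontr)
  assume "c \<noteq> 0"
  then have "1 \<le> \<bar>c\<bar>" by simp
  then have "\<bar>a\<bar> \<le> \<bar>c\<bar> * \<bar>a\<bar>" by (simp add: mult_le_cancel_right1)
  then show False using assms by (simp add: abs_mult)
qed

definition int_box :: "nat \<Rightarrow> (nat \<Rightarrow> int) \<Rightarrow> (nat \<Rightarrow> int) set" where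
  "int_box d b = {\<rho>. (\<forall>r\<ge>d. \<rho> r = 0) \<and> (\<forall>r<d. 0 \<le> \<rho> r \<and> \<rho> r < b r)}"

lemma card_int_box: "card (int_box d b) = (\<Prod>r<d. nat (b r))"
proof -
  define ext :: "(nat \<Rightarrow> int) \<Rightarrow> nat \<Rightarrow> int" where "ext f r = (if r < d then f r else 0)" for f r
  have "int_box d b = ext ` PiE {..<d} (\<lambda>r. {0..<b r})"
  proof
    show "int_box d b \<subseteq> ext ` PiE {..<d} (\<lambda>r. {0..<b r})"
    proof
      fix \<rho> assume "\<rho> \<in> int_box d b"
      then have "\<rho> = ext (restrict \<rho> {..<d})" "restrict \<rho> {..<d} \<in> PiE {..<d} (\<lambda>r. {0..<b r})"
        by (auto simp: int_box_def ext_def)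
      then show "\<rho> \<in> ext ` PiE {..<d} (\<lambda>r. {0..<b r})" by blast
    qed
    show "ext ` PiE {..<d} (\<lambda>r. {0..<b r}) \<subseteq> int_box d b"
    proof
      fix \<rho> assume "\<rho> \<in> ext ` PiE {..<d} (\<lambda>r. {0..<b r})"
      then obtain f where "f \<in> PiE {..<d} (\<lambda>r. {0..<b r})" "\<rho> = ext f" by blast
      moreover have "\<forall>r<d. f r \<in> {0..<b r}" using PiE_mem[OF \<open>f \<in> _\<close>] by simp
      ultimately show "\<rho> \<in> int_box d b" by (simp add: int_box_def ext_def)
    qed
  qed
  moreover have "inj_on ext (PiE {..<d} (\<lambda>r. {0..<b r}))"
  proof (rule inj_onI)
    fix f f' assume f: "f \<in> PiE {..<d} (\<lambda>r. {0..<b r})" "f' \<in> PiE {..<d} (\<lambda>r. {0..<b r})"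
      and "ext f = ext f'"
    show "f = f'"
    proof (rule PiE_ext[OF f])
      fix r assume "r \<in> {..<d}"
      then show "f r = f' r" using fun_cong[OF \<open>ext f = ext f'\<close>, of r] by (simp add: ext_def)
    qed
  qed
  ultimately show ?thesis by (simp add: card_image card_PiE)
qed

definition replace_col :: "nat \<Rightarrow> nat \<Rightarrow> nat \<Rightarrow> nat set" where
  "replace_col d i j = insert j ({..<d} - {i})"

lemma finite_replace_col [simp]: "finite (replace_col d i j)"
  by (simp add: replace_col_def)

lemma card_replace_col: "i < d \<Longrightarrow> d \<le> j \<Longrightarrow> card (replace_col d i j) = d"
  by (simp add: replace_col_def card_Diff_singleton)

locale positive_diagonal =
  fixes d :: nat and Y :: "nat \<Rightarrow> nat \<Rightarrow> int"
  assumes off_diag: "\<And>r k. r < d \<Longrightarrow> k < d \<Longrightarrow> r \<noteq> k \<Longrightarrow> Y r k = 0"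
    and diag_pos: "\<And>k. k < d \<Longrightarrow> Y k k > 0"
begin

lemma sum_replace_col:
  fixes c :: "nat \<Rightarrow> 'a::comm_ring_1"
  assumes "r < d" "d \<le> j"
  shows "(\<Sum>e\<in>replace_col d i j. c e * of_int (Y r e))
           = c j * of_int (Y r j) + (if r = i then 0 else c r * of_int (Y r r))"
proof -
  have "(\<Sum>e\<in>{..<d} - {i}. c e * of_int (Y r e))
          = (\<Sum>e\<in>{..<d} - {i}. if e = r then c r * of_int (Y r r) else 0)"
    using off_diag[OF \<open>r < d\<close>] by (intro sum.cong) auto
  then show ?thesis using assms by (simp add: replace_col_def)
qed

lemma cols_indep_replace_col_iff:
  assumes "i < d" "d \<le> j"
  shows "cols_indep d Y (replace_col d i j) \<longleftrightarrow> Y i j \<noteq> 0"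
proof
  assume indep: "cols_indep d Y (replace_col d i j)"
  show "Y i j \<noteq> 0"
  proof
    assume "Y i j = 0"
    \<comment> \<open>then column \<open>j\<close> is a combination of the other diagonal columns\<close>
    define c :: "nat \<Rightarrow> real" where "c e = (if e = j then -1 else Y e j / Y e e)" for e
    have "(\<Sum>e\<in>replace_col d i j. c e * real_of_int (Y r e)) = 0" if "r < d" for r
      using that assms \<open>Y i j = 0\<close> diag_pos[OF that] by (auto simp: sum_replace_col c_def)
    then have "c j = 0" using indep unfolding cols_indep_def replace_col_def by blast
    then show False by (simp add: c_def)
  qed
next
  assume "Y i j \<noteq> 0"
  show "cols_indep d Y (replace_col d i j)"
    unfolding cols_indep_def
  proof (intro allI impI ballI)
    fix c :: "nat \<Rightarrow> real" and e
    assume "\<forall>r<d. (\<Sum>e\<in>replace_col d i j. c e * real_of_int (Y r e)) = 0" and e: "e \<in> replace_col d i j"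
    then have row: "c j * Y r j + (if r = i then 0 else c r * Y r r) = 0" if "r < d" for r
      using that assms by (simp add: sum_replace_col)
    have "c j = 0" using row[OF \<open>i < d\<close>] \<open>Y i j \<noteq> 0\<close> by simp
    then show "c e = 0"
      using e row[of e] diag_pos[of e] by (auto simp: replace_col_def)
  qed
qed

lemma mat_rk_replace_col_eq_iff:
  assumes "i < d" "d \<le> j"
  shows "mat_rk d Y (replace_col d i j) = d \<longleftrightarrow> Y i j \<noteq> 0"
  using mat_rk_eq_card_iff[of "replace_col d i j" d Y] card_replace_col[OF assms]
    cols_indep_replace_col_iff[OF assms] by simp

lemma gen_group_replace_col_iff:
  assumes "d \<le> j"
  shows "g \<in> gen_group d Y (replace_col d i j) \<longleftrightarrow> (\<forall>r\<ge>d. g r = 0) \<and>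
     (\<exists>c. \<forall>r<d. g r = c j * Y r j + (if r = i then 0 else c r * Y r r))"
  unfolding gen_group_def using sum_replace_col[OF _ assms, where 'a=int] by simp

lemma span_lattice_pts_replace_col:
  assumes "i < d" "d \<le> j" "Y i j \<noteq> 0"
  shows "span_lattice_pts d Y (replace_col d i j) = {z. \<forall>r\<ge>d. z r = 0}"
proof -
  have "\<exists>c. \<forall>r<d. real_of_int (z r) = (\<Sum>e\<in>replace_col d i j. c e * real_of_int (Y r e))" for z
  proof
    define q :: real where "q = z i / Y i j"
    define c :: "nat \<Rightarrow> real" where "c e = (if e = j then q else (z e - q * Y e j) / Y e e)" for e
    show "\<forall>r<d. real_of_int (z r) = (\<Sum>e\<in>replace_col d i j. c e * real_of_int (Y r e))"
      using assms diag_pos[THEN less_imp_neq] by (auto simp: sum_replace_col c_def q_def)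
  qed
  then show ?thesis unfolding span_lattice_pts_def by blast
qed

lemma replace_col_box_cover:
  assumes "i < d" "d \<le> j" "Y i j \<noteq> 0" "\<forall>r\<ge>d. z r = 0"
  shows "\<exists>\<rho>\<in>int_box d ((\<lambda>r. Y r r)(i := \<bar>Y i j\<bar>)). z - \<rho> \<in> gen_group d Y (replace_col d i j)"
proof
  define q where "q = (z i div \<bar>Y i j\<bar>) * sgn (Y i j)"
  define w where "w r = z r - q * Y r j" for r
  define \<rho> where "\<rho> r = (if r < d then (if r = i then z i mod \<bar>Y i j\<bar> else w r mod Y r r) else 0)" for r
  have "\<forall>r<d. (z - \<rho>) r = q * Y r j + (if r = i then 0 else (w r div Y r r) * Y r r)"
  proof (intro allI impI)
    fix r assume "r < d"
    show "(z - \<rho>) r = q * Y r j + (if r = i then 0 else (w r div Y r r) * Y r r)"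
    proof (cases "r = i")
      case True
      have "q * Y i j = (z i div \<bar>Y i j\<bar>) * \<bar>Y i j\<bar>"
        unfolding q_def by (simp add: abs_sgn mult.assoc mult.commute[of "sgn (Y i j)"])
      then show ?thesis using True \<open>r < d\<close> by (simp add: \<rho>_def minus_mod_eq_div_mult)
    next
      case False
      have "w r div Y r r * Y r r = w r - w r mod Y r r" by (simp add: minus_mod_eq_div_mult)
      then show ?thesis using False \<open>r < d\<close> by (simp add: \<rho>_def, simp add: w_def)
    qed
  qed
  then have "\<exists>c. \<forall>r<d. (z - \<rho>) r = c j * Y r j + (if r = i then 0 else c r * Y r r)"
    using assms(2) by (intro exI[of _ "\<lambda>e. if e = j then q else w e div Y e e"]) auto
  then show "z - \<rho> \<in> gen_group d Y (replace_col d i j)"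
    using assms by (simp add: gen_group_replace_col_iff \<rho>_def)
  show "\<rho> \<in> int_box d ((\<lambda>r. Y r r)(i := \<bar>Y i j\<bar>))"
    using assms diag_pos by (simp add: int_box_def \<rho>_def)
qed

lemma replace_col_box_unique:
  assumes "i < d" "d \<le> j"
    and \<rho>: "\<rho> \<in> int_box d ((\<lambda>r. Y r r)(i := \<bar>Y i j\<bar>))"
    and \<rho>': "\<rho>' \<in> int_box d ((\<lambda>r. Y r r)(i := \<bar>Y i j\<bar>))"
    and "\<rho>' - \<rho> \<in> gen_group d Y (replace_col d i j)"
  shows "\<rho>' = \<rho>"
proof
  obtain c where c: "\<forall>r<d. \<rho>' r - \<rho> r = c j * Y r j + (if r = i then 0 else c r * Y r r)"
    using assms by (auto simp: gen_group_replace_col_iff)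
  have "\<bar>c j * Y i j\<bar> < \<bar>Y i j\<bar>" using c \<rho> \<rho>' \<open>i < d\<close> by (force simp: int_box_def)
  then have "c j = 0" by (rule abs_mult_less_abs_imp_zero)
  fix r
  show "\<rho>' r = \<rho> r"
  proof (cases "r < d \<and> r \<noteq> i")
    case True
    then have "\<bar>c r * Y r r\<bar> < \<bar>Y r r\<bar>" using c \<open>c j = 0\<close> \<rho> \<rho>' by (force simp: int_box_def)
    then show ?thesis using c \<open>c j = 0\<close> True abs_mult_less_abs_imp_zero by force
  next
    case False
    then show ?thesis using c \<open>c j = 0\<close> \<rho> \<rho>' \<open>i < d\<close> by (auto simp: int_box_def)
  qed
qed

lemma mat_mult_replace_col:
  assumes "i < d" "d \<le> j" "Y i j \<noteq> 0"
  shows "mat_mult d Y (replace_col d i j) = nat \<bar>Y i j\<bar> * (\<Prod>k\<in>{..<d} - {i}. nat (Y k k))"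
proof -
  have cosets: "(\<lambda>g r. z r + g r) = (+) z" for z :: "nat \<Rightarrow> int"
    by (simp add: fun_eq_iff)
  have "mat_mult d Y (replace_col d i j) = card (int_box d ((\<lambda>r. Y r r)(i := \<bar>Y i j\<bar>)))"
    unfolding mat_mult_def cosets span_lattice_pts_replace_col[OF assms]
  proof (rule card_cosets_fundamental_domain)
    show "int_box d ((\<lambda>r. Y r r)(i := \<bar>Y i j\<bar>)) \<subseteq> {z. \<forall>r\<ge>d. z r = 0}"
      by (auto simp: int_box_def)
  qed (use assms replace_col_box_cover replace_col_box_unique gen_group_add gen_group_uminus
        zero_in_gen_group in auto)
  also have "\<dots> = nat \<bar>Y i j\<bar> * (\<Prod>k\<in>{..<d} - {i}. nat (Y k k))"
    using \<open>i < d\<close> by (simp add: card_int_box prod.remove)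
  finally show ?thesis .
qed

end

theorem lemma3p3:
  fixes d N :: nat and X X' :: "nat \<Rightarrow> nat \<Rightarrow> int"
  assumes "d \<le> N"
    and full_rank: "mat_rk d X {..<N} = d"
    and B_diag: "\<forall>i<d. \<forall>j<d. i \<noteq> j \<longrightarrow> X i j = 0"
    and B_nonneg: "\<forall>i<d. X i i \<ge> 0"
    and B_full_rank: "mat_rk d X {..<d} = d"
    and same_B: "\<forall>i<d. \<forall>j<d. X' i j = X i j"
    and same: "same_arith_matroid d N X X'"
  shows "\<forall>i<d. \<forall>j. d \<le> j \<and> j < N \<longrightarrow> \<bar>X i j\<bar> = \<bar>X' i j\<bar>"
\<comment> \<open>\<open>full_rank\<close> is implied by \<open>B_full_rank\<close> and not needed\<close>
proof (intro allI impI)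
  fix i j assume "i < d" and j: "d \<le> j \<and> j < N"
  then have ij: "i < d" "d \<le> j" by simp_all
  have pos: "\<forall>k<d. X k k > 0" using diag_pos_of_full_rank[OF B_diag B_nonneg B_full_rank] .
  interpret X: positive_diagonal d X using B_diag pos by unfold_locales auto
  interpret X': positive_diagonal d X' using B_diag pos same_B by unfold_locales auto
  have "replace_col d i j \<subseteq> {..<N}" using ij j \<open>d \<le> N\<close> by (auto simp: replace_col_def)
  then have rk: "mat_rk d X (replace_col d i j) = mat_rk d X' (replace_col d i j)"
    and mult: "mat_mult d X (replace_col d i j) = mat_mult d X' (replace_col d i j)"
    using same unfolding same_arith_matroid_def by blast+
  have "X i j = 0 \<longleftrightarrow> X' i j = 0"
    using rk X.mat_rk_replace_col_eq_iff[OF ij] X'.mat_rk_replace_col_eq_iff[OF ij] by simp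
  moreover have "\<bar>X i j\<bar> = \<bar>X' i j\<bar>" if "X i j \<noteq> 0" "X' i j \<noteq> 0"
  proof -
    define P where "P = (\<Prod>k\<in>{..<d} - {i}. nat (X k k))"
    have "(\<Prod>k\<in>{..<d} - {i}. nat (X' k k)) = P"
      unfolding P_def using same_B by (intro prod.cong) auto
    then have "nat \<bar>X i j\<bar> * P = nat \<bar>X' i j\<bar> * P"
      using mult X.mat_mult_replace_col[OF ij that(1)] X'.mat_mult_replace_col[OF ij that(2)]
      by (simp add: P_def)
    moreover have "P > 0" unfolding P_def using pos by (simp add: prod_pos)
    ultimately show ?thesis by simp
  qed
  ultimately show "\<bar>X i j\<bar> = \<bar>X' i j\<bar>" by fastforce
qed

end
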